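(* Let $A_1,\dots,A_{20}$ be the vertices of a regular dodecahedron in $\mathbb R^3$ with centre $O$, and let $\Gamma$ be any sphere centred at $O$ (of positive radius). There are at most nine real numbers $\lambda$ for which the function $M\mapsto\sum_{i=1}^{20}|MA_i|^{\lambda}$ is constant on $\Gamma\setminus\{A_1,\dots,A_{20}\}$.
   Context: $|MA|$ denotes Euclidean distance. *)

theory Defs
  imports "HOL-Analysis.Analysis"
begin

definition golden :: real where
  "golden = (1 + sqrt 5) / 2"

definition std_dodeca :: "(real^3) set" where
  "std_dodeca =
     {vector [a, b, c] | a b c. a \<in> {-1, 1} \<and> b \<in> {-1, 1} \<and> c \<in> {-1, 1}}
   \<union> {vector [0, a / golden, b * golden] | a b. a \<in> {-1, 1} \<and> b \<in> {-1, 1}}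
   \<union> {vector [a / golden, b * golden, 0] | a b. a \<in> {-1, 1} \<and> b \<in> {-1, 1}}
   \<union> {vector [a * golden, 0, b / golden] | a b. a \<in> {-1, 1} \<and> b \<in> {-1, 1}}"

definition regular_dodecahedron :: "(real^3) set \<Rightarrow> real^3 \<Rightarrow> bool" where
  "regular_dodecahedron V C \<longleftrightarrow>
     (\<exists>f r. orthogonal_transformation f \<and> r > 0 \<and> V = (\<lambda>x. C + r *\<^sub>R f x) ` std_dodeca)"

end

theory Submission
  imports Defs
begin

text \<open>Put \<open>M\<^sub>1\<close> on the ray through the vertex \<open>(1, 1, 1)\<close> and \<open>M\<^sub>2\<close> on the ray through
  \<open>(0, golden, 1)\<close>. Seen from \<open>M\<^sub>1\<close> the twenty vertices lie at no more than six distinct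
  distances, seen from \<open>M\<^sub>2\<close> at no more than four, so every admissible \<open>\<lambda>\<close> is a real zero of a
  difference of two exponential sums with at most ten terms. This difference is not identically
  zero, since the vertex antipodal to \<open>M\<^sub>1\<close> is farther from \<open>M\<^sub>1\<close> than every vertex is from
  \<open>M\<^sub>2\<close>; and by Rolle's theorem such a sum has fewer real zeros than terms. If \<open>M\<^sub>1\<close> is itself
  a vertex, one of its distances vanishes, leaving five terms, and \<open>M\<^sub>1\<close> is a limit of admissible
  points: constancy passes to \<open>M\<^sub>1\<close> by continuity for \<open>\<lambda> > 0\<close>, is impossible for \<open>\<lambda> < 0\<close> because
  the sum blows up there, and so \<open>\<lambda> = 0\<close> is the only additional candidate.\<close>

lemma Rolle_finite_zeros:
  fixes h h' :: "real \<Rightarrow> real"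
  assumes der: "\<And>x. (h has_real_derivative h' x) (at x)"
    and "finite S" "S \<noteq> {}" "\<And>s. s \<in> S \<Longrightarrow> h s = 0"
  obtains T where "finite T" "card T = card S - 1" "\<And>x. x \<in> T \<Longrightarrow> h' x = 0"
proof -
  have "\<exists>T. finite T \<and> card T = card S - 1 \<and> (\<forall>x\<in>T. h' x = 0 \<and> x < Max S)"
    using assms(2-4)
  proof (induction S rule: finite_linorder_max_induct)
    case empty
    then show ?case by simp
  next
    case (insert b A)
    show ?case
    proof (cases "A = {}")
      case True
      then show ?thesis by (intro exI[of _ "{}"]) simp
    next
      case False
      then obtain T where T: "finite T" "card T = card A - 1" "\<forall>x\<in>T. h' x = 0 \<and> x < Max A"
        using insert by auto
      have "Max A \<in> A" using False insert.hyps(1) by simp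
      then have lt: "Max A < b" and zeros: "h (Max A) = 0" "h b = 0"
        using insert by auto
      have "continuous_on {Max A..b} h"
        using der by (meson DERIV_isCont continuous_at_imp_continuous_on)
      then have "\<exists>z>Max A. z < b \<and> (h has_real_derivative 0) (at z)"
        by (intro Rolle[OF lt]) (use zeros der in \<open>auto simp: real_differentiable_def\<close>)
      then obtain z where z: "Max A < z" "z < b" "(h has_real_derivative 0) (at z)"
        by blast
      have "h' z = 0" using DERIV_unique[OF der z(3)] .
      moreover have "z \<notin> T" using T(3) z(1) by auto
      moreover have "Max (insert b A) = b" using insert.hyps lt False by simp
      moreover have "card A \<ge> 1" using False insert.hyps(1) by (simp add: Suc_leI card_gt_0_iff)
      ultimately show ?thesis
        using T z insert.hyps by (intro exI[of _ "insert z T"]) auto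
    qed
  qed
  then show ?thesis using that by blast
qed

text \<open>Dividing by \<open>exp (l j0 * t)\<close> and differentiating
  removes one term, while by Rolle it loses at most one zero.\<close>
lemma card_zeros_exp_sum_less:
  fixes a l :: "'a \<Rightarrow> real"
  assumes "finite J" "finite S"
    and "\<And>t. t \<in> S \<Longrightarrow> (\<Sum>j\<in>J. a j * exp (l j * t)) = 0"
    and "\<exists>t. (\<Sum>j\<in>J. a j * exp (l j * t)) \<noteq> 0"
  shows "card S < card J"
  using assms
proof (induction J arbitrary: a l S rule: finite_induct)
  case empty
  then show ?case by simp
next
  case (insert j0 J)
  define h where "h t = a j0 + (\<Sum>j\<in>J. a j * exp ((l j - l j0) * t))" for t
  define h' where "h' t = (\<Sum>j\<in>J. (a j * (l j - l j0)) * exp ((l j - l j0) * t))" for t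
  have h_eq: "h t = exp (- l j0 * t) * (\<Sum>j\<in>insert j0 J. a j * exp (l j * t))" for t
    using insert.hyps by (simp add: h_def sum_distrib_left algebra_simps flip: exp_add)
  have der: "(h has_real_derivative h' x) (at x)" for x
    unfolding h_def h'_def by (auto intro!: derivative_eq_intros DERIV_sum simp: algebra_simps)
  show ?case
  proof (cases "S = {}")
    case True
    then show ?thesis using insert.hyps by simp
  next
    case False
    have "\<And>s. s \<in> S \<Longrightarrow> h s = 0" using insert.prems(2) h_eq by simp
    then obtain T where T: "finite T" "card T = card S - 1" "\<And>x. x \<in> T \<Longrightarrow> h' x = 0"
      using Rolle_finite_zeros[OF der insert.prems(1) False] by blast
    have "\<exists>t. h' t \<noteq> 0"
    proof (rule ccontr)
      assume "\<not> (\<exists>t. h' t \<noteq> 0)"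
      then have "h x = h y" for x y using der by (auto intro: DERIV_isconst_all)
      then have "h x = 0" for x using \<open>\<And>s. s \<in> S \<Longrightarrow> h s = 0\<close> False by (metis ex_in_conv)
      then show False using insert.prems(3) h_eq by simp
    qed
    then have "card T < card J"
      using insert.IH[of T "\<lambda>j. a j * (l j - l j0)" "\<lambda>j. l j - l j0"] T unfolding h'_def by auto
    then show ?thesis using T(2) insert.hyps False insert.prems(1) by (simp add: card_gt_0_iff)
  qed
qed

lemma finite_zeros_exp_sum:
  fixes a l :: "'a \<Rightarrow> real"
  assumes "finite J" and "\<exists>t. (\<Sum>j\<in>J. a j * exp (l j * t)) \<noteq> 0"
  shows "finite {t. (\<Sum>j\<in>J. a j * exp (l j * t)) = 0}
      \<and> card {t. (\<Sum>j\<in>J. a j * exp (l j * t)) = 0} < card J"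
proof -
  let ?Z = "{t. (\<Sum>j\<in>J. a j * exp (l j * t)) = 0}"
  have less: "card S < card J" if "finite S" "S \<subseteq> ?Z" for S
    using card_zeros_exp_sum_less[OF assms(1) that(1) _ assms(2)] that(2) by auto
  have "finite ?Z"
  proof (rule ccontr)
    assume "infinite ?Z"
    then obtain S where "S \<subseteq> ?Z" "finite S" "card S = card J"
      using infinite_arbitrarily_large by blast
    then show False using less by fastforce
  qed
  then show ?thesis using less[of ?Z] by auto
qed

lemma sum_powr_eq_exp_sum:
  fixes d :: "'a \<Rightarrow> real"
  assumes "finite S"
  shows "(\<Sum>x\<in>S. d x powr t) = (\<Sum>y\<in>d ` S - {0}. real (card {x\<in>S. d x = y}) * exp (ln y * t))"
proof -
  have "(\<Sum>x\<in>S. d x powr t) = (\<Sum>y\<in>d ` S. real (card {x\<in>S. d x = y}) * y powr t)"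
    by (subst sum.image_gen[OF assms]) (auto intro: sum.cong)
  also have "\<dots> = (\<Sum>y\<in>d ` S - {0}. real (card {x\<in>S. d x = y}) * y powr t)"
    by (rule sum.mono_neutral_right) (use assms in auto)
  also have "\<dots> = (\<Sum>y\<in>d ` S - {0}. real (card {x\<in>S. d x = y}) * exp (ln y * t))"
    by (rule sum.cong) (auto simp: powr_def mult.commute)
  finally show ?thesis .
qed

lemma finite_eq_power_sums:
  fixes f :: "'a \<Rightarrow> real" and g :: "'b \<Rightarrow> real"
  assumes "finite S" "finite T" "\<exists>t. (\<Sum>x\<in>S. f x powr t) \<noteq> (\<Sum>y\<in>T. g y powr t)"
  defines "E \<equiv> {t. (\<Sum>x\<in>S. f x powr t) = (\<Sum>y\<in>T. g y powr t)}"
  shows "finite E \<and> card E < card (f ` S - {0}) + card (g ` T - {0})"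
proof -
  define J where "J = (f ` S - {0}) <+> (g ` T - {0})"
  define a where "a = case_sum (\<lambda>y. real (card {x\<in>S. f x = y})) (\<lambda>y. - real (card {x\<in>T. g x = y}))"
  define l where "l = case_sum (\<lambda>y::real. ln y) (\<lambda>y::real. ln y)"
  have diff: "(\<Sum>x\<in>S. f x powr t) - (\<Sum>y\<in>T. g y powr t) = (\<Sum>j\<in>J. a j * exp (l j * t))" for t
    using assms(1,2)
    by (simp add: sum_powr_eq_exp_sum J_def sum.Plus a_def l_def comp_def sum_negf)
  have "E = {t. (\<Sum>j\<in>J. a j * exp (l j * t)) = 0}"
    unfolding E_def by (auto simp flip: diff)
  moreover have "card J = card (f ` S - {0}) + card (g ` T - {0})"
    unfolding J_def using assms(1,2) by (simp add: card_Plus)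
  moreover have "finite J" unfolding J_def using assms(1,2) by simp
  moreover have "\<exists>t. (\<Sum>j\<in>J. a j * exp (l j * t)) \<noteq> 0"
    using assms(3) by (metis diff eq_iff_diff_eq_0)
  ultimately show ?thesis using finite_zeros_exp_sum[of J a l] by simp
qed

lemma power_sums_differ:
  fixes f :: "'a \<Rightarrow> real" and g :: "'b \<Rightarrow> real"
  assumes "finite S" "finite T" "s \<in> S" "0 < f s" "\<And>y. y \<in> T \<Longrightarrow> 0 \<le> g y \<and> g y < f s"
  shows "\<exists>t. (\<Sum>x\<in>S. f x powr t) \<noteq> (\<Sum>y\<in>T. g y powr t)"
proof -
  define q where "q = (f s + Max (insert 0 (g ` T))) / 2"
  have "Max (insert 0 (g ` T)) < f s" using assms by simp
  moreover have "0 \<le> Max (insert 0 (g ` T))" "\<And>y. y \<in> T \<Longrightarrow> g y \<le> Max (insert 0 (g ` T))"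
    using assms(2) by auto
  ultimately have q: "0 < q" "q < f s" "\<And>y. y \<in> T \<Longrightarrow> g y \<le> q"
    using assms(4) unfolding q_def by force+
  then obtain n where "real (card T) < (f s / q) ^ n"
    using real_arch_pow[of "f s / q"] by auto
  then have "real (card T) * q ^ n < f s ^ n"
    using q by (simp add: power_divide pos_less_divide_eq)
  moreover have "(\<Sum>y\<in>T. g y powr real n) \<le> real (card T) * q ^ n"
  proof -
    have "(\<Sum>y\<in>T. g y powr real n) \<le> (\<Sum>y\<in>T. q powr real n)"
      using assms(5) q by (intro sum_mono powr_mono2) auto
    then show ?thesis using q by (simp add: powr_realpow)
  qed
  moreover have "f s ^ n \<le> (\<Sum>x\<in>S. f x powr real n)"
    using member_le_sum[OF assms(3) _ assms(1), of "\<lambda>x. f x powr real n"] assms(4)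
    by (simp add: powr_realpow)
  ultimately show ?thesis by (intro exI[of _ "real n"]) linarith
qed

lemma islimpt_sphere_diff_finite:
  fixes a :: "'a::euclidean_space"
  assumes "2 \<le> DIM('a)" "0 < R" "x \<in> sphere a R" "finite F"
  shows "x islimpt sphere a R - F"
proof -
  have "x islimpt sphere a R"
  proof (rule connected_imp_perfect)
    show "connected (sphere a R)" using assms(1) by (rule connected_sphere)
    fix y
    have "2 *\<^sub>R a - x \<in> sphere a R"
      using assms(3) by (auto simp: dist_norm norm_minus_commute scaleR_2 algebra_simps)
    moreover have "2 *\<^sub>R a - x \<noteq> x"
    proof
      assume "2 *\<^sub>R a - x = x"
      then have "2 *\<^sub>R (a - x) = 0" by (simp add: algebra_simps scaleR_2)
      then show False using assms(2,3) by simp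
    qed
    ultimately show "sphere a R \<noteq> {y}" using assms(3) by (metis singletonD)
  qed (use assms(3) in simp)
  moreover have "sphere a R \<subseteq> (sphere a R - F) \<union> F" by blast
  ultimately show ?thesis
    using islimpt_subset islimpt_Un islimpt_finite[OF assms(4)] by metis
qed

text \<open>The hypothesis \<open>t \<noteq> 0\<close> is needed: as \<open>0 powr 0 = 0\<close>, for \<open>t = 0\<close> the sum jumps at the
  points \<open>P i\<close>.\<close>
lemma dist_power_sum_const_at_limit_point:
  fixes P :: "'i \<Rightarrow> 'a::metric_space"
  assumes "finite I" "x islimpt S" "t \<noteq> 0"
    and const: "\<And>y. y \<in> S \<Longrightarrow> (\<Sum>i\<in>I. dist y (P i) powr t) = c"
  shows "(\<Sum>i\<in>I. dist x (P i) powr t) = c"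
proof (cases "t < 0 \<and> x \<in> P ` I")
  case True
  then obtain i0 where i0: "i0 \<in> I" "P i0 = x" by blast
  define e where "e = (\<bar>c\<bar> + 1) powr (1 / t)"
  have "e > 0" unfolding e_def by simp
  then obtain y where y: "y \<in> S" "y \<noteq> x" "dist y x < e"
    using assms(2) unfolding islimpt_approachable by blast
  have "\<bar>c\<bar> + 1 = e powr t" unfolding e_def using True by (simp add: powr_powr)
  also have "\<dots> < dist y x powr t"
    using True y by (intro powr_less_mono2_neg) auto
  also have "\<dots> \<le> (\<Sum>i\<in>I. dist y (P i) powr t)"
    using member_le_sum[OF i0(1) _ assms(1), of "\<lambda>i. dist y (P i) powr t"] i0(2) by simp
  finally show ?thesis using const[OF y(1)] by simp
next
  case False
  let ?F = "\<lambda>y. \<Sum>i\<in>I. dist y (P i) powr t"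
  have "(?F \<longlongrightarrow> ?F x) (at x within S)"
    using False assms(3) by (intro tendsto_intros) (auto simp: order_less_le)
  moreover have "(?F \<longlongrightarrow> c) (at x within S)"
    using const by (intro tendsto_eventually) (auto simp: eventually_at_filter)
  moreover have "at x within S \<noteq> bot" using assms(2) trivial_limit_within by blast
  ultimately show ?thesis using tendsto_unique by blast
qed

definition const_dist_power_exponents :: "'a::metric_space set \<Rightarrow> ('i \<Rightarrow> 'a) \<Rightarrow> 'i set \<Rightarrow> real set" where
  "const_dist_power_exponents S P I = {t. \<exists>c. \<forall>M\<in>S. (\<Sum>i\<in>I. dist M (P i) powr t) = c}"

lemma const_dist_power_exponents_subset:
  assumes "x \<in> S" "y \<in> S"
  shows "const_dist_power_exponents S P I
           \<subseteq> {t. (\<Sum>i\<in>I. dist x (P i) powr t) = (\<Sum>i\<in>I. dist y (P i) powr t)}"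
  using assms unfolding const_dist_power_exponents_def by auto

lemma const_dist_power_exponents_subset_limit_point:
  assumes "finite I" "x islimpt S" "y \<in> S"
  shows "const_dist_power_exponents S P I
           \<subseteq> insert 0 {t. (\<Sum>i\<in>I. dist x (P i) powr t) = (\<Sum>i\<in>I. dist y (P i) powr t)}"
proof
  fix t assume "t \<in> const_dist_power_exponents S P I"
  then obtain c where c: "\<And>M. M \<in> S \<Longrightarrow> (\<Sum>i\<in>I. dist M (P i) powr t) = c"
    unfolding const_dist_power_exponents_def by blast
  show "t \<in> insert 0 {t. (\<Sum>i\<in>I. dist x (P i) powr t) = (\<Sum>i\<in>I. dist y (P i) powr t)}"
    using dist_power_sum_const_at_limit_point[OF assms(1,2) _ c] c[OF assms(3)] by auto
qed

lemma golden_gt_1: "golden > 1"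
  unfolding golden_def by simp

lemma golden_sq: "golden * golden = golden + 1"
  unfolding golden_def by (simp add: field_simps)

lemma inverse_golden: "inverse golden = golden - 1"
  using golden_gt_1 golden_sq by (simp add: field_simps)

lemma golden_plus_1_less: "golden + 1 < sqrt 3 * sqrt (golden + 2)"
proof -
  have "(golden + 1)\<^sup>2 < 3 * (golden + 2)"
    using golden_sq golden_gt_1 by (simp add: power2_eq_square algebra_simps)
  then show ?thesis
    using golden_gt_1 by (simp add: real_less_rsqrt flip: real_sqrt_mult)
qed

lemma finite_std_dodeca: "finite std_dodeca"
proof -
  have "{vector [a, b, c] | a b c. a \<in> {-1, 1} \<and> b \<in> {-1, 1} \<and> c \<in> {-1, 1}}
      = (\<lambda>(a, b, c). vector [a, b, c] :: real^3) ` ({-1, 1} \<times> {-1, 1} \<times> {-1, 1})"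
    by auto
  then show ?thesis unfolding std_dodeca_def by (auto intro: finite_image_set2)
qed

lemma std_dodeca_inner_self: "v \<in> std_dodeca \<Longrightarrow> v \<bullet> v = 3"
  unfolding std_dodeca_def
  by (auto simp: inner_vec_def sum_3 inverse_golden golden_sq divide_inverse algebra_simps)

lemma std_dodeca_inner_diagonal:
  "v \<in> std_dodeca \<Longrightarrow> vector [1, 1, 1] \<bullet> v \<in> {3, 1, -1, -3, 2 * golden - 1, 1 - 2 * golden}"
  unfolding std_dodeca_def
  by (auto simp: inner_vec_def sum_3 inverse_golden golden_sq divide_inverse algebra_simps)

lemma std_dodeca_inner_0_golden_1:
  "v \<in> std_dodeca \<Longrightarrow> vector [0, golden, 1] \<bullet> v \<in> {golden + 1, golden - 1, 1 - golden, - golden - 1}"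
  unfolding std_dodeca_def
  by (auto simp: inner_vec_def sum_3 inverse_golden golden_sq divide_inverse algebra_simps)

lemma norm_std_dodeca: "v \<in> std_dodeca \<Longrightarrow> norm v = sqrt 3"
  by (simp add: norm_eq_sqrt_inner std_dodeca_inner_self)

lemma dist_scaled_std_dodeca:
  assumes "v \<in> std_dodeca"
  shows "dist p (r *\<^sub>R v) = sqrt ((norm p)\<^sup>2 - 2 * r * (p \<bullet> v) + 3 * r\<^sup>2)"
  using std_dodeca_inner_self[OF assms]
  by (simp add: dist_norm norm_eq_sqrt_inner inner_diff_left inner_diff_right inner_commute
      power2_eq_square algebra_simps)

lemma card_dists_std_dodeca_le:
  "card ((\<lambda>v. dist (s *\<^sub>R u) (r *\<^sub>R v)) ` std_dodeca) \<le> card ((\<lambda>v. u \<bullet> v) ` std_dodeca)"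
proof -
  have "(\<lambda>v. dist (s *\<^sub>R u) (r *\<^sub>R v)) ` std_dodeca
      = (\<lambda>k. sqrt ((norm (s *\<^sub>R u))\<^sup>2 - 2 * r * (s * k) + 3 * r\<^sup>2)) ` (\<lambda>v. u \<bullet> v) ` std_dodeca"
    by (auto simp: image_image dist_scaled_std_dodeca intro!: image_cong)
  then show ?thesis by (simp add: card_image_le finite_std_dodeca)
qed

lemma dist_scaled_std_dodeca_less:
  assumes "v \<in> std_dodeca" "0 < r" "- (p \<bullet> v) < sqrt 3 * norm p"
  shows "dist p (r *\<^sub>R v) < norm p + sqrt 3 * r"
proof -
  have "(norm p)\<^sup>2 - 2 * r * (p \<bullet> v) + 3 * r\<^sup>2 < (norm p + sqrt 3 * r)\<^sup>2"
    using mult_strict_left_mono[OF assms(3), of "2 * r"] assms(2)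
    by (simp add: power2_eq_square algebra_simps)
  then have "sqrt ((norm p)\<^sup>2 - 2 * r * (p \<bullet> v) + 3 * r\<^sup>2) < sqrt ((norm p + sqrt 3 * r)\<^sup>2)"
    by (rule real_sqrt_less_mono)
  then show ?thesis using assms(2) by (simp add: dist_scaled_std_dodeca[OF assms(1)])
qed

lemma card_dists_diagonal_std_dodeca_le:
  "card ((\<lambda>v. dist (s *\<^sub>R vector [1, 1, 1]) (r *\<^sub>R v)) ` std_dodeca) \<le> 6"
proof -
  let ?K = "[3, 1, -1, -3, 2 * golden - 1, 1 - 2 * golden]"
  have "(\<lambda>v. vector [1, 1, 1] \<bullet> v) ` std_dodeca \<subseteq> set ?K"
    using std_dodeca_inner_diagonal by auto
  then have "card ((\<lambda>v. vector [1, 1, 1] \<bullet> v) ` std_dodeca) \<le> length ?K"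
    by (meson card_length card_mono finite_set order_trans)
  then show ?thesis using card_dists_std_dodeca_le[of s "vector [1, 1, 1]" r] by simp
qed

lemma card_dists_0_golden_1_std_dodeca_le:
  "card ((\<lambda>v. dist (s *\<^sub>R vector [0, golden, 1]) (r *\<^sub>R v)) ` std_dodeca) \<le> 4"
proof -
  let ?K = "[golden + 1, golden - 1, 1 - golden, - golden - 1]"
  have "(\<lambda>v. vector [0, golden, 1] \<bullet> v) ` std_dodeca \<subseteq> set ?K"
    using std_dodeca_inner_0_golden_1 by auto
  then have "card ((\<lambda>v. vector [0, golden, 1] \<bullet> v) ` std_dodeca) \<le> length ?K"
    by (meson card_length card_mono finite_set order_trans)
  then show ?thesis using card_dists_std_dodeca_le[of s "vector [0, golden, 1]" r] by simp
qed

text \<open>No vertex of the dodecahedron lies on the line through \<open>(0, golden, 1)\<close>, so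
  Cauchy--Schwarz is strict.\<close>
lemma abs_inner_0_golden_1_std_dodeca_less:
  assumes "v \<in> std_dodeca" "s \<noteq> 0"
  shows "\<bar>(s *\<^sub>R vector [0, golden, 1]) \<bullet> v\<bar> < sqrt 3 * norm (s *\<^sub>R vector [0, golden, 1] :: real^3)"
proof -
  define u :: "real^3" where "u = vector [0, golden, 1]"
  have "\<bar>u \<bullet> v\<bar> \<le> golden + 1"
    using std_dodeca_inner_0_golden_1[OF assms(1)] golden_gt_1 unfolding u_def by auto
  also have "\<dots> < sqrt 3 * sqrt (golden + 2)"
    by (rule golden_plus_1_less)
  also have "sqrt (golden + 2) = norm u"
    using golden_sq by (simp add: u_def norm_eq_sqrt_inner inner_vec_def sum_3 add.commute)
  finally have "\<bar>s\<bar> * \<bar>u \<bullet> v\<bar> < \<bar>s\<bar> * (sqrt 3 * norm u)"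
    using assms(2) by simp
  then show ?thesis unfolding u_def[symmetric] by (simp add: abs_mult algebra_simps)
qed

lemma dist_diagonal_antipode:
  assumes "0 \<le> s" "0 \<le> r"
  shows "dist (s *\<^sub>R vector [1, 1, 1] :: real^3) (r *\<^sub>R vector [-1, -1, -1])
       = norm (s *\<^sub>R vector [1, 1, 1] :: real^3) + sqrt 3 * r"
proof -
  define u :: "real^3" where "u = vector [1, 1, 1]"
  have norm_u: "norm u = sqrt 3"
    by (simp add: u_def norm_eq_sqrt_inner inner_vec_def sum_3)
  have "vector [-1, -1, -1] = - u"
    by (simp add: u_def vec_eq_iff forall_3 vector_3)
  then have "dist (s *\<^sub>R u) (r *\<^sub>R vector [-1, -1, -1]) = norm ((s + r) *\<^sub>R u)"
    by (simp add: dist_norm scaleR_add_left)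
  also have "\<dots> = norm (s *\<^sub>R u) + sqrt 3 * r"
    using assms norm_u by (simp add: algebra_simps flip: scaleR_add_left)
  finally show ?thesis by (simp only: u_def)
qed

lemma scaled_0_golden_1_not_scaled_std_dodeca:
  assumes "s \<noteq> 0"
  shows "s *\<^sub>R vector [0, golden, 1] \<notin> (\<lambda>v. r *\<^sub>R v) ` std_dodeca"
proof
  assume "s *\<^sub>R vector [0, golden, 1] \<in> (\<lambda>v. r *\<^sub>R v) ` std_dodeca"
  then obtain v where v: "v \<in> std_dodeca" "s *\<^sub>R vector [0, golden, 1] = r *\<^sub>R v" by blast
  have "\<bar>(r *\<^sub>R v) \<bullet> v\<bar> = sqrt 3 * norm (r *\<^sub>R v)"
    using std_dodeca_inner_self[OF v(1)] norm_std_dodeca[OF v(1)]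
    by (simp add: abs_mult flip: real_sqrt_mult)
  then show False
    using abs_inner_0_golden_1_std_dodeca_less[OF v(1) assms] v(2) by simp
qed

lemma power_sums_differ_diagonal_0_golden_1:
  fixes s1 s2 r :: real
  defines "p1 \<equiv> s1 *\<^sub>R vector [1, 1, 1] :: real^3" and "p2 \<equiv> s2 *\<^sub>R vector [0, golden, 1] :: real^3"
  assumes "0 < r" "0 \<le> s1" "s2 \<noteq> 0" "norm p1 = norm p2"
  shows "\<exists>t. (\<Sum>v\<in>std_dodeca. dist p1 (r *\<^sub>R v) powr t) \<noteq> (\<Sum>v\<in>std_dodeca. dist p2 (r *\<^sub>R v) powr t)"
proof (rule power_sums_differ[OF finite_std_dodeca finite_std_dodeca])
  show "vector [-1, -1, -1] \<in> std_dodeca" unfolding std_dodeca_def by blast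
  have far: "dist p1 (r *\<^sub>R vector [-1, -1, -1]) = norm p2 + sqrt 3 * r"
    using dist_diagonal_antipode assms(3,4,6) unfolding p1_def by simp
  then show "0 < dist p1 (r *\<^sub>R vector [-1, -1, -1])"
    using assms(3) by (simp add: add_nonneg_pos)
  fix v assume "v \<in> std_dodeca"
  moreover have "- (p2 \<bullet> v) < sqrt 3 * norm p2"
    using abs_inner_0_golden_1_std_dodeca_less[OF \<open>v \<in> std_dodeca\<close> assms(5)] unfolding p2_def by linarith
  ultimately show "0 \<le> dist p2 (r *\<^sub>R v) \<and> dist p2 (r *\<^sub>R v) < dist p1 (r *\<^sub>R vector [-1, -1, -1])"
    using dist_scaled_std_dodeca_less assms(3) far by simp
qed

theorem card_const_dist_power_exponents_std_dodeca:
  fixes r R :: real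
  assumes "0 < r" "0 < R"
  defines "T \<equiv> const_dist_power_exponents (sphere 0 R - (\<lambda>v. r *\<^sub>R v) ` std_dodeca) (\<lambda>v. r *\<^sub>R v) std_dodeca"
  shows "finite T \<and> card T \<le> 9"
proof -
  let ?V = "(\<lambda>v. r *\<^sub>R v) ` std_dodeca"
  let ?dists = "\<lambda>p. (\<lambda>v. dist p (r *\<^sub>R v)) ` std_dodeca - {0}"
  define s1 where "s1 = R / norm (vector [1, 1, 1] :: real^3)"
  define s2 where "s2 = R / norm (vector [0, golden, 1] :: real^3)"
  define p1 :: "real^3" where "p1 = s1 *\<^sub>R vector [1, 1, 1]"
  define p2 :: "real^3" where "p2 = s2 *\<^sub>R vector [0, golden, 1]"
  define E where "E = {t. (\<Sum>v\<in>std_dodeca. dist p1 (r *\<^sub>R v) powr t) = (\<Sum>v\<in>std_dodeca. dist p2 (r *\<^sub>R v) powr t)}"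
  have "vector [1, 1, 1] \<noteq> (0 :: real^3)" "vector [0, golden, 1] \<noteq> (0 :: real^3)"
    by (simp_all add: vec_eq_iff forall_3)
  then have s: "0 < s1" "0 < s2" and p_sphere: "p1 \<in> sphere 0 R" "p2 \<in> sphere 0 R"
    using assms(2) by (auto simp: s1_def s2_def p1_def p2_def)
  have p2_S: "p2 \<in> sphere 0 R - ?V"
    using p_sphere scaled_0_golden_1_not_scaled_std_dodeca s unfolding p2_def by simp
  have E: "finite E \<and> card E < card (?dists p1) + card (?dists p2)"
    unfolding E_def
    by (rule finite_eq_power_sums[OF finite_std_dodeca finite_std_dodeca])
      (use power_sums_differ_diagonal_0_golden_1[of r s1 s2] assms(1) s p_sphere in \<open>simp add: p1_def p2_def\<close>)
  have card_p1: "card ((\<lambda>v. dist p1 (r *\<^sub>R v)) ` std_dodeca) \<le> 6"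
    unfolding p1_def by (rule card_dists_diagonal_std_dodeca_le)
  have "card (?dists p2) \<le> 4"
    using card_dists_0_golden_1_std_dodeca_le[of s2 r] card_Diff1_le[of "(\<lambda>v. dist p2 (r *\<^sub>R v)) ` std_dodeca" 0]
    unfolding p2_def by simp
  show ?thesis
  proof (cases "p1 \<in> ?V")
    case True
    then have "0 \<in> (\<lambda>v. dist p1 (r *\<^sub>R v)) ` std_dodeca" by auto
    then have "card (?dists p1) \<le> 5" using card_p1 finite_std_dodeca by simp
    moreover have "T \<subseteq> insert 0 E"
      unfolding T_def E_def
      by (rule const_dist_power_exponents_subset_limit_point[OF finite_std_dodeca _ p2_S])
        (rule islimpt_sphere_diff_finite, use p_sphere assms(2) finite_std_dodeca in auto)
    ultimately have "finite (insert 0 E)" "card (insert 0 E) \<le> 9"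
      using E \<open>card (?dists p2) \<le> 4\<close> by (simp_all add: card_insert_if)
    with \<open>T \<subseteq> insert 0 E\<close> show ?thesis
      using card_mono finite_subset order_trans by metis
  next
    case False
    then have "T \<subseteq> E"
      unfolding T_def E_def using p_sphere p2_S by (intro const_dist_power_exponents_subset) auto
    moreover have "card (?dists p1) \<le> 6"
      using card_p1 card_Diff1_le[of "(\<lambda>v. dist p1 (r *\<^sub>R v)) ` std_dodeca" 0] by simp
    ultimately have "card E \<le> 9"
      using E \<open>card (?dists p2) \<le> 4\<close> by linarith
    with \<open>T \<subseteq> E\<close> show ?thesis
      using E card_mono finite_subset order_trans by metis
  qed
qed

lemma const_dist_power_exponents_regular_dodecahedron:
  fixes A :: "nat \<Rightarrow> real^3"
  assumes "regular_dodecahedron (A ` {1..20}) C" "inj_on A {1..20}"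
  obtains r where "0 < r"
    "const_dist_power_exponents (sphere C R - A ` {1..20}) A {1..20}
       \<subseteq> const_dist_power_exponents (sphere 0 R - (\<lambda>v. r *\<^sub>R v) ` std_dodeca) (\<lambda>v. r *\<^sub>R v) std_dodeca"
proof -
  obtain f r where f: "orthogonal_transformation f" and "0 < r"
    and V: "A ` {1..20} = (\<lambda>v. C + r *\<^sub>R f v) ` std_dodeca"
    using assms(1) unfolding regular_dodecahedron_def by blast
  have lin: "linear f" and "inj f"
    using f orthogonal_transformation_linear orthogonal_transformation_inj by blast+
  have "inj_on (\<lambda>v. C + r *\<^sub>R f v) std_dodeca"
    using \<open>0 < r\<close> \<open>inj f\<close> unfolding inj_on_def inj_def by simp
  then have sum_eq: "(\<Sum>i\<in>{1..20}. dist (C + f p) (A i) powr t)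
      = (\<Sum>v\<in>std_dodeca. dist (C + f p) (C + r *\<^sub>R f v) powr t)" for p t
    using sum.reindex[OF assms(2), of "\<lambda>M. dist (C + f p) M powr t"]
      sum.reindex[of "\<lambda>v. C + r *\<^sub>R f v" std_dodeca "\<lambda>M. dist (C + f p) M powr t"] V
    by (simp add: comp_def)
  have dist_eq: "dist (C + f p) (C + r *\<^sub>R f v) = dist p (r *\<^sub>R v)" for p v
    using orthogonal_transformation_norm[OF f, of "p - r *\<^sub>R v"]
    by (simp add: dist_norm linear_diff[OF lin] linear_cmul[OF lin])
  show ?thesis
  proof (rule that[OF \<open>0 < r\<close>], rule subsetI)
    fix t assume "t \<in> const_dist_power_exponents (sphere C R - A ` {1..20}) A {1..20}"
    then obtain c where c: "\<And>M. M \<in> sphere C R - A ` {1..20} \<Longrightarrow> (\<Sum>i\<in>{1..20}. dist M (A i) powr t) = c"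
      unfolding const_dist_power_exponents_def by blast
    have "(\<Sum>v\<in>std_dodeca. dist p (r *\<^sub>R v) powr t) = c"
      if p: "p \<in> sphere 0 R - (\<lambda>v. r *\<^sub>R v) ` std_dodeca" for p
    proof -
      have "C + f p \<in> sphere C R"
        using p orthogonal_transformation_norm[OF f] by (simp add: dist_norm)
      moreover have "C + f p \<notin> A ` {1..20}"
      proof
        assume "C + f p \<in> A ` {1..20}"
        then obtain v where "v \<in> std_dodeca" "f p = f (r *\<^sub>R v)"
          using V by (auto simp: linear_cmul[OF lin])
        then show False using p \<open>inj f\<close> unfolding inj_def by blast
      qed
      ultimately have "(\<Sum>i\<in>{1..20}. dist (C + f p) (A i) powr t) = c" using c by blast
      then show ?thesis using sum_eq dist_eq by simp
    qed
    then show "t \<in> const_dist_power_exponents (sphere 0 R - (\<lambda>v. r *\<^sub>R v) ` std_dodeca) (\<lambda>v. r *\<^sub>R v) std_dodeca"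
      unfolding const_dist_power_exponents_def by blast
  qed
qed

theorem mainTheorem8:
  fixes A :: "nat \<Rightarrow> real^3" and C :: "real^3" and R :: real
  assumes "regular_dodecahedron (A ` {1..20}) C"
    and "inj_on A {1..20}"
    and "R > 0"
  shows "finite {t::real. \<exists>c. \<forall>M \<in> sphere C R - A ` {1..20}.
                    (\<Sum>i=1..20. dist M (A i) powr t) = c}
       \<and> card {t::real. \<exists>c. \<forall>M \<in> sphere C R - A ` {1..20}.
                    (\<Sum>i=1..20. dist M (A i) powr t) = c} \<le> 9"
proof -
  obtain r where "0 < r" and sub:
    "const_dist_power_exponents (sphere C R - A ` {1..20}) A {1..20}
       \<subseteq> const_dist_power_exponents (sphere 0 R - (\<lambda>v. r *\<^sub>R v) ` std_dodeca) (\<lambda>v. r *\<^sub>R v) std_dodeca"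
    using const_dist_power_exponents_regular_dodecahedron[OF assms(1,2)] .
  with card_const_dist_power_exponents_std_dodeca[OF \<open>0 < r\<close> assms(3)]
  have "finite (const_dist_power_exponents (sphere C R - A ` {1..20}) A {1..20})
      \<and> card (const_dist_power_exponents (sphere C R - A ` {1..20}) A {1..20}) \<le> 9"
    by (meson card_mono finite_subset order_trans)
  then show ?thesis unfolding const_dist_power_exponents_def .
qed

end
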